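(* Label the hyperedges so that $|h_1|\le|h_2|\le\dots\le|h_M|$. If $N\ge2$ and $M\ge2$, then $$\lambda_{N-1}\le\max\{|h_M|-1,\ |h_{M-1}|\}.$$ More generally, for every integer $k$ with $1\le k\le\min(N,M)-1$, $$\lambda_{N-k}\le\max_{i=0,\dots,k}\bigl(|h_{M-i}|-k+i\bigr).$$
   Context: Let $\Gamma=(V,H,\mathcal C)$ be a hypergraph with real coefficients: $V=\{v_1,\dots,v_N\}$ is a finite set of vertices, $H=(h_1,\dots,h_M)$ is a finite family of non-empty subsets $h_j\subseteq V$ called hyperedges (repetitions allowed; hyperedges are distinguished by their index), and $\mathcal C=\{C_{v,h}\in\mathbb R\}$ is a family of real coefficients with $C_{v,h}=0$ if and only if $v\notin h$. Standing assumptions: every vertex lies in at least one hyperedge, and $\Gamma$ is connected. The degree of $v$ is $\deg v=\sum_{h\in H}C_{v,h}^2>0$. The vertex normalized Laplacian is $Lf(v)=\frac{1}{\deg v}\sum_{h\in H}C_{v,h}\sum_{w\in V}C_{w,h}f(w)$; its eigenvalues are $\lambda_1\le\dots\le\lambda_N$. The cardinality $|h|$ of a hyperedge is its number of vertices. *)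

theory Defs
  imports "Jordan_Normal_Form.Char_Poly"
begin

text \<open>A hypergraph with real coefficients: vertices 0..N-1, hyperedges 0..M-1,
  coefficient C v j of vertex v in hyperedge j. Hyperedge j is the set of
  vertices with nonzero coefficient.\<close>

definition hedge :: "nat \<Rightarrow> (nat \<Rightarrow> nat \<Rightarrow> real) \<Rightarrow> nat \<Rightarrow> nat set" where
  "hedge N C j = {v. v < N \<and> C v j \<noteq> 0}"

definition hdeg :: "nat \<Rightarrow> (nat \<Rightarrow> nat \<Rightarrow> real) \<Rightarrow> nat \<Rightarrow> real" where
  "hdeg M C v = (\<Sum>j<M. (C v j)^2)"

definition hadj :: "nat \<Rightarrow> nat \<Rightarrow> (nat \<Rightarrow> nat \<Rightarrow> real) \<Rightarrow> nat \<Rightarrow> nat \<Rightarrow> bool" where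
  "hadj N M C v w = (\<exists>j<M. v \<in> hedge N C j \<and> w \<in> hedge N C j)"

definition hconnected :: "nat \<Rightarrow> nat \<Rightarrow> (nat \<Rightarrow> nat \<Rightarrow> real) \<Rightarrow> bool" where
  "hconnected N M C = (\<forall>v<N. \<forall>w<N. (hadj N M C)\<^sup>*\<^sup>* v w)"

definition hlaplacian :: "nat \<Rightarrow> nat \<Rightarrow> (nat \<Rightarrow> nat \<Rightarrow> real) \<Rightarrow> real mat" where
  "hlaplacian N M C = mat N N (\<lambda>(v, w). (1 / hdeg M C v) * (\<Sum>j<M. C v j * C w j))"

definition sorted_eigenvalues :: "real mat \<Rightarrow> real list \<Rightarrow> bool" where
  "sorted_eigenvalues A ls \<longleftrightarrow> length ls = dim_row A \<and> sorted ls \<and>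
     char_poly A = (\<Prod>a\<leftarrow>ls. [:- a, 1:])"

end

theory Submission
  imports Defs "Jordan_Normal_Form.Schur_Decomposition" "HOL-Analysis.Convex"
begin

text \<open>The Laplacian is self-adjoint for the inner product weighted by the degrees, and its
  quadratic form is \<open>\<langle>L f, f\<rangle> = \<Sum>\<^sub>h (\<Sum>\<^sub>v C v h * f v)\<^sup>2\<close>. The span of \<open>d\<close>-orthogonal
  eigenvectors for the \<open>k + 1\<close> largest eigenvalues contains an \<open>f \<noteq> 0\<close> with
  \<open>\<Sum>\<^sub>v C v h * f v = 0\<close> for the \<open>k\<close> largest hyperedges \<open>h\<close>. Its Rayleigh quotient is at least
  \<open>\<lambda>\<^sub>N\<^sub>-\<^sub>k\<close>; only the remaining hyperedges contribute to the quadratic form, and Cauchy-Schwarz on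
  each of them bounds the quotient by \<open>|h\<^sub>M\<^sub>-\<^sub>k|\<close>. This gives the term \<open>i = k\<close> of the maximum.
  The orthogonal eigenvectors come from a Schur triangularisation by Gram-Schmidt: orthogonalising a
  triangular basis of a self-adjoint operator yields eigenvectors.\<close>

definition matvec :: "nat \<Rightarrow> (nat \<Rightarrow> nat \<Rightarrow> real) \<Rightarrow> (nat \<Rightarrow> real) \<Rightarrow> nat \<Rightarrow> real" where
  "matvec n a x = (\<lambda>v. if v < n then (\<Sum>w<n. a v w * x w) else 0)"

definition wdot :: "nat \<Rightarrow> (nat \<Rightarrow> real) \<Rightarrow> (nat \<Rightarrow> real) \<Rightarrow> (nat \<Rightarrow> real) \<Rightarrow> real" where
  "wdot n d x y = (\<Sum>v<n. d v * x v * y v)"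

definition fspan :: "nat \<Rightarrow> (nat \<Rightarrow> nat \<Rightarrow> real) \<Rightarrow> (nat \<Rightarrow> real) set" where
  "fspan m q = {x. \<exists>\<rho>. x = (\<lambda>v. \<Sum>i<m. \<rho> i * q i v)}"

text \<open>Vectors of \<open>\<real>\<^sup>n\<close> are functions \<open>nat \<Rightarrow> real\<close> that vanish from \<open>n\<close> on, so that eigenvector
  equations are equalities of functions.\<close>

definition vanishes_from :: "nat \<Rightarrow> (nat \<Rightarrow> real) \<Rightarrow> bool" where
  "vanishes_from n x \<longleftrightarrow> (\<forall>v\<ge>n. x v = 0)"

definition orth_eigenfamily ::
    "nat \<Rightarrow> (nat \<Rightarrow> real) \<Rightarrow> (nat \<Rightarrow> nat \<Rightarrow> real) \<Rightarrow> (nat \<Rightarrow> real) \<Rightarrow> nat \<Rightarrow> (nat \<Rightarrow> nat \<Rightarrow> real) \<Rightarrow> bool"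
  where
  "orth_eigenfamily n d a \<mu> m q \<longleftrightarrow>
     (\<forall>j<m. vanishes_from n (q j) \<and> matvec n a (q j) = (\<lambda>v. \<mu> j * q j v) \<and> wdot n d (q j) (q j) > 0) \<and>
     (\<forall>i<m. \<forall>j<m. i \<noteq> j \<longrightarrow> wdot n d (q i) (q j) = 0)"

lemma fspan_add: "x \<in> fspan m q \<Longrightarrow> y \<in> fspan m q \<Longrightarrow> (\<lambda>v. x v + y v) \<in> fspan m q"
proof -
  assume "x \<in> fspan m q" "y \<in> fspan m q"
  then obtain \<rho> \<sigma> where "x = (\<lambda>v. \<Sum>i<m. \<rho> i * q i v)" "y = (\<lambda>v. \<Sum>i<m. \<sigma> i * q i v)"
    unfolding fspan_def by blast
  then show ?thesis unfolding fspan_def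
    by (intro CollectI exI[of _ "\<lambda>i. \<rho> i + \<sigma> i"]) (simp add: distrib_right sum.distrib)
qed

lemma fspan_smult: "x \<in> fspan m q \<Longrightarrow> (\<lambda>v. s * x v) \<in> fspan m q"
proof -
  assume "x \<in> fspan m q"
  then obtain \<rho> where "x = (\<lambda>v. \<Sum>i<m. \<rho> i * q i v)"
    unfolding fspan_def by blast
  then show ?thesis unfolding fspan_def
    by (intro CollectI exI[of _ "\<lambda>i. s * \<rho> i"]) (simp add: sum_distrib_left mult.assoc)
qed

lemma fspan_zero: "(\<lambda>v. 0) \<in> fspan m q"
  unfolding fspan_def by (intro CollectI exI[of _ "\<lambda>i. 0"]) simp

lemma fspan_sum:
  "finite L \<Longrightarrow> (\<And>l. l \<in> L \<Longrightarrow> x l \<in> fspan m q) \<Longrightarrow> (\<lambda>v. \<Sum>l\<in>L. f l * x l v) \<in> fspan m q"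
proof (induction L rule: finite_induct)
  case empty
  then show ?case using fspan_zero by simp
next
  case (insert l L)
  have "(\<lambda>v. f l * x l v + (\<Sum>l\<in>L. f l * x l v)) \<in> fspan m q"
    using insert by (intro fspan_add fspan_smult) auto
  then show ?case using insert by simp
qed

lemma fspan_basis: "j < m \<Longrightarrow> q j \<in> fspan m q"
  unfolding fspan_def
proof (intro CollectI exI[of _ "\<lambda>i. if i = j then 1 else 0"] ext)
  fix v assume "j < m"
  have "(\<Sum>i<m. (if i = j then 1 else 0) * q i v) = (\<Sum>i<m. if i = j then q j v else 0)"
    by (rule sum.cong) auto
  also have "\<dots> = q j v" using \<open>j < m\<close> by simp
  finally show "q j v = (\<Sum>i<m. (if i = j then 1 else 0) * q i v)" by simp
qed

lemma fspan_Suc: "x \<in> fspan m q \<Longrightarrow> x \<in> fspan (Suc m) q"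
proof -
  assume "x \<in> fspan m q"
  then obtain \<rho> where x: "x = (\<lambda>v. \<Sum>i<m. \<rho> i * q i v)"
    unfolding fspan_def by blast
  show ?thesis unfolding fspan_def
    by (intro CollectI exI[of _ "\<lambda>i. if i < m then \<rho> i else 0"] ext) (simp add: x)
qed

lemma fspan_cong: "(\<And>i. i < m \<Longrightarrow> q i = q' i) \<Longrightarrow> fspan m q = fspan m q'"
  unfolding fspan_def by (metis (no_types, lifting) lessThan_iff sum.cong)

lemma wdot_commute: "wdot n d x y = wdot n d y x"
  unfolding wdot_def by (simp add: mult_ac)

lemma wdot_sum_left:
  "finite I \<Longrightarrow> wdot n d (\<lambda>v. \<Sum>i\<in>I. f i * x i v) y = (\<Sum>i\<in>I. f i * wdot n d (x i) y)"
  unfolding wdot_def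
  by (simp add: sum_distrib_left sum_distrib_right mult_ac sum.swap[of _ "{..<n}"])

lemma wdot_diff_sum_left:
  assumes "finite I"
  shows "wdot n d (\<lambda>v. x v - (\<Sum>i\<in>I. f i * z i v)) y = wdot n d x y - (\<Sum>i\<in>I. f i * wdot n d (z i) y)"
proof -
  have "wdot n d (\<lambda>v. x v - (\<Sum>i\<in>I. f i * z i v)) y
      = wdot n d x y - wdot n d (\<lambda>v. \<Sum>i\<in>I. f i * z i v) y"
    unfolding wdot_def by (simp add: algebra_simps sum_subtractf)
  then show ?thesis using wdot_sum_left[OF assms] by simp
qed

lemma wdot_diff_smult_left: "wdot n d (\<lambda>v. x v - s * z v) y = wdot n d x y - s * wdot n d z y"
  unfolding wdot_def by (simp add: algebra_simps sum_subtractf sum_distrib_left)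

lemma wdot_smult_right: "wdot n d x (\<lambda>v. s * z v) = s * wdot n d x z"
  unfolding wdot_def by (simp add: algebra_simps sum_distrib_left)

lemma wdot_self_pos:
  assumes "\<forall>v<n. d v > 0" and "v < n" "x v \<noteq> 0"
  shows "wdot n d x x > 0"
  unfolding wdot_def
  by (rule sum_pos2[of _ v]) (use assms in \<open>auto simp: mult.assoc zero_less_mult_iff\<close>)

lemma wdot_orthogonal_family_left:
  fixes q :: "nat \<Rightarrow> nat \<Rightarrow> real"
  assumes orth: "\<forall>i<m. \<forall>j<m. i \<noteq> j \<longrightarrow> wdot n d (q i) (q j) = 0" and "j < m"
  shows "wdot n d (\<lambda>v. \<Sum>i<m. \<alpha> i * q i v) (q j) = \<alpha> j * wdot n d (q j) (q j)"
proof -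
  have "wdot n d (\<lambda>v. \<Sum>i<m. \<alpha> i * q i v) (q j) = (\<Sum>i<m. \<alpha> i * wdot n d (q i) (q j))"
    by (rule wdot_sum_left) simp
  also have "\<dots> = (\<Sum>i<m. if i = j then \<alpha> j * wdot n d (q j) (q j) else 0)"
    by (rule sum.cong) (use orth \<open>j < m\<close> in auto)
  finally show ?thesis using \<open>j < m\<close> by simp
qed

lemma wdot_orthogonal_family:
  fixes q :: "nat \<Rightarrow> nat \<Rightarrow> real"
  assumes orth: "\<forall>i<m. \<forall>j<m. i \<noteq> j \<longrightarrow> wdot n d (q i) (q j) = 0"
  shows "wdot n d (\<lambda>v. \<Sum>j<m. \<beta> j * q j v) (\<lambda>v. \<Sum>j<m. \<alpha> j * q j v)
       = (\<Sum>j<m. \<beta> j * \<alpha> j * wdot n d (q j) (q j))"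
proof -
  have "wdot n d (\<lambda>v. \<Sum>j<m. \<beta> j * q j v) (\<lambda>v. \<Sum>j<m. \<alpha> j * q j v)
      = (\<Sum>j<m. \<beta> j * wdot n d (\<lambda>v. \<Sum>j<m. \<alpha> j * q j v) (q j))"
    by (subst wdot_sum_left) (simp_all add: wdot_commute)
  also have "\<dots> = (\<Sum>j<m. \<beta> j * \<alpha> j * wdot n d (q j) (q j))"
    by (rule sum.cong) (simp_all add: wdot_orthogonal_family_left[OF orth])
  finally show ?thesis .
qed

lemma fspan_orthogonal_eq_zero:
  assumes orth: "\<forall>i<m. \<forall>j<m. i \<noteq> j \<longrightarrow> wdot n d (q i) (q j) = 0"
    and pos: "\<forall>i<m. wdot n d (q i) (q i) > 0"
    and x: "x \<in> fspan m q" and x_orth: "\<forall>i<m. wdot n d x (q i) = 0"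
  shows "x = (\<lambda>v. 0)"
proof -
  obtain \<rho> where x_eq: "x = (\<lambda>v. \<Sum>i<m. \<rho> i * q i v)" using x unfolding fspan_def by blast
  have "\<rho> i = 0" if "i < m" for i
    using x_orth pos wdot_orthogonal_family_left[OF orth that, of \<rho>] that by (auto simp: x_eq)
  then show ?thesis unfolding x_eq by simp
qed

lemma wdot_matvec_self_adjoint:
  assumes sym: "\<forall>v<n. \<forall>w<n. d v * a v w = d w * a w v"
  shows "wdot n d (matvec n a x) y = wdot n d x (matvec n a y)"
proof -
  have "wdot n d (matvec n a x) y = (\<Sum>v<n. \<Sum>w<n. d v * a v w * x w * y v)"
    unfolding wdot_def matvec_def by (simp add: sum_distrib_left sum_distrib_right mult_ac)
  also have "\<dots> = (\<Sum>w<n. \<Sum>v<n. d v * a v w * x w * y v)" by (rule sum.swap)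
  also have "\<dots> = (\<Sum>w<n. \<Sum>v<n. d w * a w v * x w * y v)"
    by (intro sum.cong refl) (use sym in auto)
  also have "\<dots> = wdot n d x (matvec n a y)"
    unfolding wdot_def matvec_def by (simp add: sum_distrib_left sum_distrib_right mult_ac)
  finally show ?thesis .
qed

lemma matvec_sum:
  "finite I \<Longrightarrow> matvec n a (\<lambda>v. \<Sum>i\<in>I. f i * y i v) = (\<lambda>v. \<Sum>i\<in>I. f i * matvec n a (y i) v)"
  unfolding matvec_def
  by (auto simp: algebra_simps sum_distrib_left sum.swap[of _ "{..<n}"] intro!: ext)

lemma matvec_diff_sum:
  "finite I \<Longrightarrow> matvec n a (\<lambda>v. x v - (\<Sum>i\<in>I. f i * y i v))
     = (\<lambda>v. matvec n a x v - (\<Sum>i\<in>I. f i * matvec n a (y i) v))"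
  unfolding matvec_def
  by (auto simp: algebra_simps sum_subtractf sum_distrib_left sum.swap[of _ "{..<n}"] intro!: ext)

lemma wdot_gram_schmidt_residual:
  fixes q :: "nat \<Rightarrow> nat \<Rightarrow> real"
  assumes orth: "\<forall>i<k. \<forall>j<k. i \<noteq> j \<longrightarrow> wdot n d (q i) (q j) = 0"
    and pos: "wdot n d (q j) (q j) > 0" and "j < k"
  shows "wdot n d (\<lambda>v. x v - (\<Sum>i<k. wdot n d x (q i) / wdot n d (q i) (q i) * q i v)) (q j) = 0"
proof -
  let ?c = "\<lambda>i. wdot n d x (q i) / wdot n d (q i) (q i)"
  have "wdot n d (\<lambda>v. x v - (\<Sum>i<k. ?c i * q i v)) (q j)
      = wdot n d x (q j) - (\<Sum>i<k. ?c i * wdot n d (q i) (q j))"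
    by (rule wdot_diff_sum_left) simp
  also have "(\<Sum>i<k. ?c i * wdot n d (q i) (q j)) = wdot n d (\<lambda>v. \<Sum>i<k. ?c i * q i v) (q j)"
    by (rule wdot_sum_left[symmetric]) simp
  also have "\<dots> = ?c j * wdot n d (q j) (q j)"
    by (rule wdot_orthogonal_family_left[OF orth \<open>j < k\<close>])
  also have "\<dots> = wdot n d x (q j)" using pos by simp
  finally show ?thesis by simp
qed

lemma matvec_eq_of_residual_in_fspan:
  assumes sym: "\<forall>v<n. \<forall>w<n. d v * a v w = d w * a w v"
    and fam: "orth_eigenfamily n d a \<mu> k q"
    and x_orth: "\<forall>i<k. wdot n d x (q i) = 0"
    and residual: "(\<lambda>v. matvec n a x v - c * x v) \<in> fspan k q"
  shows "matvec n a x = (\<lambda>v. c * x v)"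
proof -
  have eigen: "\<And>i. i < k \<Longrightarrow> matvec n a (q i) = (\<lambda>v. \<mu> i * q i v)"
    and pos: "\<forall>i<k. wdot n d (q i) (q i) > 0"
    and orth: "\<forall>i<k. \<forall>j<k. i \<noteq> j \<longrightarrow> wdot n d (q i) (q j) = 0"
    using fam unfolding orth_eigenfamily_def by auto
  have "\<forall>i<k. wdot n d (\<lambda>v. matvec n a x v - c * x v) (q i) = 0"
  proof (intro allI impI)
    fix i assume i: "i < k"
    have "wdot n d (matvec n a x) (q i) = \<mu> i * wdot n d x (q i)"
      using wdot_matvec_self_adjoint[OF sym] eigen[OF i] by (simp add: wdot_smult_right)
    then show "wdot n d (\<lambda>v. matvec n a x v - c * x v) (q i) = 0"
      using x_orth i by (simp add: wdot_diff_smult_left)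
  qed
  then have "(\<lambda>v. matvec n a x v - c * x v) = (\<lambda>v. 0)"
    using fspan_orthogonal_eq_zero[OF orth pos residual] by blast
  then show ?thesis by (metis eq_iff_diff_eq_0)
qed

lemma gram_schmidt_step:
  fixes p q t :: "nat \<Rightarrow> nat \<Rightarrow> real"
  assumes dpos: "\<forall>v<n. d v > 0"
    and sym: "\<forall>v<n. \<forall>w<n. d v * a v w = d w * a w v"
    and fam: "orth_eigenfamily n d a (\<lambda>j. t j j) k q"
    and p_vanish: "\<forall>l\<le>k. vanishes_from n (p l)"
    and p_tri: "matvec n a (p k) = (\<lambda>v. \<Sum>l<Suc k. t l k * p l v)"
    and p_span: "\<forall>l<k. p l \<in> fspan k q"
    and r_eq: "r = (\<lambda>v. p k v - (\<Sum>i<k. wdot n d (p k) (q i) / wdot n d (q i) (q i) * q i v))"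
    and r_nonzero: "v0 < n" "r v0 \<noteq> 0"
  shows "orth_eigenfamily n d a (\<lambda>j. t j j) (Suc k) (q(k := r))"
proof -
  define c where "c i = wdot n d (p k) (q i) / wdot n d (q i) (q i)" for i
  have r_eq': "r = (\<lambda>v. p k v - (\<Sum>i<k. c i * q i v))" by (simp add: r_eq c_def)
  have q_vanish: "\<And>i. i < k \<Longrightarrow> vanishes_from n (q i)"
    and q_eigen: "\<And>i. i < k \<Longrightarrow> matvec n a (q i) = (\<lambda>v. t i i * q i v)"
    and q_pos: "\<And>i. i < k \<Longrightarrow> wdot n d (q i) (q i) > 0"
    and q_orth: "\<forall>i<k. \<forall>j<k. i \<noteq> j \<longrightarrow> wdot n d (q i) (q j) = 0"
    using fam unfolding orth_eigenfamily_def by auto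
  have r_orth: "wdot n d r (q i) = 0" if "i < k" for i
    unfolding r_eq by (rule wdot_gram_schmidt_residual[OF q_orth q_pos[OF that] that])
  have r_vanish: "vanishes_from n r"
    using p_vanish q_vanish unfolding r_eq' vanishes_from_def by auto
  have matvec_r: "matvec n a r = (\<lambda>v. matvec n a (p k) v - (\<Sum>i<k. c i * matvec n a (q i) v))"
    unfolding r_eq' by (rule matvec_diff_sum) simp
  have residual: "(\<lambda>v. matvec n a r v - t k k * r v)
      = (\<lambda>v. (\<Sum>l<k. t l k * p l v) + (\<Sum>i<k. (t k k * c i - c i * t i i) * q i v))"
  proof
    fix v
    show "matvec n a r v - t k k * r v
        = (\<Sum>l<k. t l k * p l v) + (\<Sum>i<k. (t k k * c i - c i * t i i) * q i v)"
    proof (cases "v < n")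
      case True
      have "matvec n a r v - t k k * r v = (\<Sum>l<Suc k. t l k * p l v) - (\<Sum>i<k. c i * (t i i * q i v))
                  - t k k * (p k v - (\<Sum>i<k. c i * q i v))"
        unfolding matvec_r p_tri using q_eigen by (simp add: r_eq')
      then show ?thesis by (simp add: algebra_simps sum.distrib sum_subtractf sum_distrib_left)
    next
      case False
      then show ?thesis
        using r_vanish p_vanish q_vanish unfolding matvec_def vanishes_from_def by simp
    qed
  qed
  have "(\<lambda>v. matvec n a r v - t k k * r v) \<in> fspan k q"
    unfolding residual by (intro fspan_add fspan_sum) (auto intro: p_span[rule_format] fspan_basis)
  then have r_eigen: "matvec n a r = (\<lambda>v. t k k * r v)"
    using matvec_eq_of_residual_in_fspan[OF sym fam] r_orth by blast
  have r_pos: "wdot n d r r > 0" by (rule wdot_self_pos[where x = r]) (use dpos r_nonzero in auto)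
  have "vanishes_from n ((q(k := r)) j) \<and> matvec n a ((q(k := r)) j) = (\<lambda>v. t j j * (q(k := r)) j v)
        \<and> wdot n d ((q(k := r)) j) ((q(k := r)) j) > 0" if "j < Suc k" for j
    using that q_vanish q_eigen q_pos r_vanish r_eigen r_pos by (cases "j = k") auto
  moreover have "wdot n d ((q(k := r)) i) ((q(k := r)) j) = 0" if "i < Suc k" "j < Suc k" "i \<noteq> j" for i j
    using that q_orth r_orth wdot_commute[of n d r] by (cases "i = k"; cases "j = k") auto
  ultimately show ?thesis unfolding orth_eigenfamily_def by blast
qed

lemma gram_schmidt_orth_eigenfamily:
  fixes p t \<phi> :: "nat \<Rightarrow> nat \<Rightarrow> real"
  assumes dpos: "\<forall>v<n. d v > 0"
    and sym: "\<forall>v<n. \<forall>w<n. d v * a v w = d w * a w v"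
    and p_vanish: "\<forall>j<m. vanishes_from n (p j)"
    and p_tri: "\<forall>j<m. matvec n a (p j) = (\<lambda>v. \<Sum>l<Suc j. t l j * p l v)"
    and dual: "\<forall>i<m. \<forall>j<m. (\<Sum>v<n. \<phi> i v * p j v) = (if i = j then 1 else 0)"
  shows "\<exists>q. orth_eigenfamily n d a (\<lambda>j. t j j) m q"
proof -
  \<comment> \<open>The functionals \<open>\<phi>\<close> witness linear independence and keep each residual nonzero.\<close>
  have "\<exists>q. orth_eigenfamily n d a (\<lambda>j. t j j) k q \<and> (\<forall>j<k. p j \<in> fspan k q)
          \<and> (\<forall>l<m. \<forall>j<k. j < l \<longrightarrow> (\<Sum>v<n. \<phi> l v * q j v) = 0)" if "k \<le> m" for k
    using that
  proof (induction k)
    case 0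
    show ?case by (simp add: orth_eigenfamily_def)
  next
    case (Suc k)
    then obtain q where fam: "orth_eigenfamily n d a (\<lambda>j. t j j) k q"
      and span: "\<forall>j<k. p j \<in> fspan k q"
      and dual_q: "\<forall>l<m. \<forall>j<k. j < l \<longrightarrow> (\<Sum>v<n. \<phi> l v * q j v) = 0" by auto
    have k: "k < m" using Suc.prems by simp
    define c where "c i = wdot n d (p k) (q i) / wdot n d (q i) (q i)" for i
    define r where "r = (\<lambda>v. p k v - (\<Sum>i<k. c i * q i v))"
    have dual_r: "(\<Sum>v<n. \<phi> l v * r v) = (if l = k then 1 else 0)" if "l < m" "k \<le> l" for l
    proof -
      have "(\<Sum>v<n. \<phi> l v * r v) = (\<Sum>v<n. \<phi> l v * p k v) - (\<Sum>i<k. c i * (\<Sum>v<n. \<phi> l v * q i v))"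
        unfolding r_def by (simp add: algebra_simps sum_subtractf sum_distrib_left sum.swap[of _ "{..<n}"])
      also have "(\<Sum>i<k. c i * (\<Sum>v<n. \<phi> l v * q i v)) = 0"
        by (rule sum.neutral) (use dual_q that in auto)
      finally show ?thesis using dual that k by simp
    qed
    have "(\<Sum>v<n. \<phi> k v * r v) \<noteq> 0" using dual_r[of k] k by simp
    then obtain v0 where "v0 < n" "r v0 \<noteq> 0"
      by (metis (no_types, lifting) lessThan_iff mult_zero_right sum.neutral)
    moreover have "r = (\<lambda>v. p k v - (\<Sum>i<k. wdot n d (p k) (q i) / wdot n d (q i) (q i) * q i v))"
      by (simp add: r_def c_def)
    moreover have "\<forall>l\<le>k. vanishes_from n (p l)" using p_vanish k by auto
    moreover have "matvec n a (p k) = (\<lambda>v. \<Sum>l<Suc k. t l k * p l v)" using p_tri k by auto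
    ultimately have fam': "orth_eigenfamily n d a (\<lambda>j. t j j) (Suc k) (q(k := r))"
      using gram_schmidt_step[where t = t and q = q and p = p and r = r, OF dpos sym fam _ _ span] by blast
    have span': "p j \<in> fspan (Suc k) (q(k := r))" if "j < Suc k" for j
    proof (cases "j < k")
      case True
      then show ?thesis
        using span fspan_cong[of k q "q(k := r)"] fspan_Suc by auto
    next
      case False
      then have "j = k" using that by simp
      show ?thesis unfolding fspan_def \<open>j = k\<close>
        by (intro CollectI exI[of _ "\<lambda>i. if i < k then c i else 1"] ext) (simp add: r_def)
    qed
    have "(\<Sum>v<n. \<phi> l v * (q(k := r)) j v) = 0" if "l < m" "j < Suc k" "j < l" for l j
      using dual_q dual_r[of l] that by (cases "j = k") auto
    then show ?case using fam' span' by blast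
  qed
  from this[of m] show ?thesis by blast
qed

lemma index_mult_mat_lessThan:
  "X \<in> carrier_mat r n \<Longrightarrow> Y \<in> carrier_mat n c \<Longrightarrow> i < r \<Longrightarrow> j < c \<Longrightarrow>
   (X * Y) $$ (i, j) = (\<Sum>w<n. X $$ (i, w) * Y $$ (w, j))"
  by (auto simp: scalar_prod_def atLeast0LessThan intro!: sum.cong)

lemma sorted_eigenvalues_orth_eigenfamily:
  fixes A :: "real mat"
  assumes A: "A \<in> carrier_mat n n" and eig: "sorted_eigenvalues A ls"
    and dpos: "\<forall>v<n. d v > 0"
    and sym: "\<forall>v<n. \<forall>w<n. d v * A $$ (v, w) = d w * A $$ (w, v)"
    and "m \<le> n"
  shows "\<exists>q. orth_eigenfamily n d (\<lambda>v w. A $$ (v, w)) (\<lambda>j. ls ! (n - Suc j)) m q"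
proof -
  let ?a = "\<lambda>v w. A $$ (v, w)"
  from eig A have len: "length ls = n" and "char_poly A = (\<Prod>e\<leftarrow>ls. [:- e, 1:])"
    unfolding sorted_eigenvalues_def by auto
  then have "char_poly A = (\<Prod>e\<leftarrow>rev ls. [:- e, 1:])"
    by (metis mset_rev mset_map prod_mset_prod_list rev_map)
  moreover obtain T P Q where sd: "schur_decomposition A (rev ls) = (T, P, Q)"
    by (metis prod_cases3)
  ultimately have sim: "similar_mat_wit A T P Q" and ut: "upper_triangular T"
    and diag: "diag_mat T = rev ls"
    using schur_decomposition[OF A] by auto
  from sim A have T: "T \<in> carrier_mat n n" and P: "P \<in> carrier_mat n n" and Q: "Q \<in> carrier_mat n n"
    and QP: "Q * P = 1\<^sub>m n" and A_eq: "A = P * T * Q"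
    unfolding similar_mat_wit_def Let_def by auto
  have AP: "A * P = P * T"
  proof -
    have "A * P = (P * T) * (Q * P)" unfolding A_eq using P T Q
      by (metis assoc_mult_mat mult_carrier_mat)
    also have "\<dots> = P * T" using QP P T by simp
    finally show ?thesis .
  qed
  define p where "p j v = (if v < n then P $$ (v, j) else 0)" for j v
  have p_vanish: "\<forall>j<m. vanishes_from n (p j)" by (simp add: vanishes_from_def p_def)
  have p_tri: "\<forall>j<m. matvec n ?a (p j) = (\<lambda>v. \<Sum>l<Suc j. T $$ (l, j) * p l v)"
  proof (intro allI impI ext)
    fix j v assume "j < m"
    then have j: "j < n" using \<open>m \<le> n\<close> by simp
    show "matvec n ?a (p j) v = (\<Sum>l<Suc j. T $$ (l, j) * p l v)"
    proof (cases "v < n")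
      case True
      have "matvec n ?a (p j) v = (A * P) $$ (v, j)"
        using index_mult_mat_lessThan[OF A P True j] True by (simp add: matvec_def p_def)
      also have "\<dots> = (\<Sum>l<n. P $$ (v, l) * T $$ (l, j))"
        unfolding AP by (rule index_mult_mat_lessThan[OF P T True j])
      also have "\<dots> = (\<Sum>l<Suc j. P $$ (v, l) * T $$ (l, j))"
        by (rule sum.mono_neutral_right) (use ut T j in \<open>auto simp: upper_triangular_def\<close>)
      finally show ?thesis using True by (simp add: p_def mult.commute)
    next
      case False
      then show ?thesis by (simp add: matvec_def p_def)
    qed
  qed
  have dual: "\<forall>i<m. \<forall>j<m. (\<Sum>v<n. Q $$ (i, v) * p j v) = (if i = j then 1 else 0)"
  proof (intro allI impI)
    fix i j assume "i < m" "j < m"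
    then have ij: "i < n" "j < n" using \<open>m \<le> n\<close> by auto
    have "(\<Sum>v<n. Q $$ (i, v) * p j v) = (Q * P) $$ (i, j)"
      using index_mult_mat_lessThan[OF Q P ij] by (simp add: p_def)
    then show "(\<Sum>v<n. Q $$ (i, v) * p j v) = (if i = j then 1 else 0)" using QP ij by simp
  qed
  obtain q where fam: "orth_eigenfamily n d ?a (\<lambda>j. T $$ (j, j)) m q"
    using gram_schmidt_orth_eigenfamily[where t = "\<lambda>l j. T $$ (l, j)", OF dpos sym p_vanish p_tri dual]
    by blast
  have "T $$ (j, j) = ls ! (n - Suc j)" if "j < m" for j
  proof -
    have "j < n" using that \<open>m \<le> n\<close> by simp
    then have "T $$ (j, j) = diag_mat T ! j" using T by (simp add: diag_mat_def)
    then show ?thesis using diag \<open>j < n\<close> len by (simp add: rev_nth)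
  qed
  with fam show ?thesis unfolding orth_eigenfamily_def by auto
qed

lemma orth_eigenfamily_rayleigh_gt:
  fixes q :: "nat \<Rightarrow> nat \<Rightarrow> real"
  assumes fam: "orth_eigenfamily n d a \<mu> m q" and gt: "\<forall>j<m. c < \<mu> j"
    and j0: "j0 < m" "\<alpha> j0 \<noteq> 0"
    and f_eq: "f = (\<lambda>v. \<Sum>j<m. \<alpha> j * q j v)"
  shows "c * wdot n d f f < wdot n d (matvec n a f) f"
proof -
  have eigen: "\<And>j. j < m \<Longrightarrow> matvec n a (q j) = (\<lambda>v. \<mu> j * q j v)"
    and pos: "\<And>j. j < m \<Longrightarrow> wdot n d (q j) (q j) > 0"
    and orth: "\<forall>i<m. \<forall>j<m. i \<noteq> j \<longrightarrow> wdot n d (q i) (q j) = 0"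
    using fam unfolding orth_eigenfamily_def by auto
  have "matvec n a f = (\<lambda>v. \<Sum>j<m. \<alpha> j * matvec n a (q j) v)"
    unfolding f_eq by (rule matvec_sum) simp
  also have "\<dots> = (\<lambda>v. \<Sum>j<m. (\<alpha> j * \<mu> j) * q j v)"
    using eigen by (simp add: mult.assoc)
  finally have "wdot n d (matvec n a f) f - c * wdot n d f f
      = (\<Sum>j<m. (\<alpha> j * \<mu> j) * \<alpha> j * wdot n d (q j) (q j)) - c * (\<Sum>j<m. \<alpha> j * \<alpha> j * wdot n d (q j) (q j))"
    using wdot_orthogonal_family[OF orth] by (simp add: f_eq)
  also have "\<dots> = (\<Sum>j<m. (\<alpha> j * \<alpha> j) * ((\<mu> j - c) * wdot n d (q j) (q j)))"
    by (simp add: sum_distrib_left sum_subtractf algebra_simps)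
  also have "\<dots> > 0"
  proof (rule sum_pos2[of _ j0])
    show "0 < \<alpha> j0 * \<alpha> j0 * ((\<mu> j0 - c) * wdot n d (q j0) (q j0))"
      using j0 gt pos[of j0] by (auto simp: zero_less_mult_iff linorder_neq_iff)
    show "0 \<le> \<alpha> i * \<alpha> i * ((\<mu> i - c) * wdot n d (q i) (q i))" if "i \<in> {..<m}" for i
      using that gt pos[of i] by (simp add: less_imp_le)
  qed (use j0 in auto)
  finally show ?thesis by simp
qed

lemma homogeneous_system_nontrivial:
  fixes g :: "nat \<Rightarrow> nat \<Rightarrow> real"
  assumes "k < m"
  shows "\<exists>\<alpha>. (\<exists>j<m. \<alpha> j \<noteq> 0) \<and> (\<forall>i<k. (\<Sum>j<m. g i j * \<alpha> j) = 0)"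
proof -
  \<comment> \<open>Padding the system with zero rows gives a singular square matrix.\<close>
  define G where "G = mat m m (\<lambda>(i, j). if i < k then g i j else 0)"
  have G: "G \<in> carrier_mat m m" by (simp add: G_def)
  have "det G = 0"
  proof -
    have "(\<Prod>i = 0..<m. G $$ (i, p i)) = 0" if "p permutes {0..<m}" for p
    proof (rule prod_zero)
      have "p (m - 1) < m" using that assms permutes_in_image[OF that, of "m - 1"] by auto
      then show "\<exists>i\<in>{0..<m}. G $$ (i, p i) = 0"
        using assms by (auto simp: G_def intro!: bexI[of _ "m - 1"])
    qed simp
    then show ?thesis unfolding det_def using G by (auto intro!: sum.neutral)
  qed
  then obtain v where v: "v \<in> carrier_vec m" "v \<noteq> 0\<^sub>v m" "G *\<^sub>v v = 0\<^sub>v m"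
    using det_0_iff_vec_prod_zero[OF G] by auto
  then obtain j where "j < m" "v $ j \<noteq> 0" by (metis eq_vecI index_zero_vec carrier_vecD)
  moreover have "(\<Sum>j<m. g i j * v $ j) = 0" if "i < k" for i
  proof -
    have "(\<Sum>j<m. g i j * v $ j) = (G *\<^sub>v v) $ i"
      using that assms v(1) by (auto simp: G_def scalar_prod_def atLeast0LessThan intro!: sum.cong)
    then show ?thesis using v(3) that assms by simp
  qed
  ultimately show ?thesis by blast
qed

lemma hdeg_pos: "\<exists>j<M. v \<in> hedge N C j \<Longrightarrow> hdeg M C v > 0"
  unfolding hdeg_def hedge_def by (auto intro: sum_pos2)

lemma hdeg_mult_hlaplacian:
  "v < N \<Longrightarrow> w < N \<Longrightarrow> hdeg M C v \<noteq> 0 \<Longrightarrow>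
   hdeg M C v * hlaplacian N M C $$ (v, w) = (\<Sum>j<M. C v j * C w j)"
  by (simp add: hlaplacian_def)

lemma hlaplacian_quadratic_form:
  assumes covered: "\<And>v. v < N \<Longrightarrow> \<exists>j<M. v \<in> hedge N C j"
  shows "wdot N (hdeg M C) (matvec N (\<lambda>v w. hlaplacian N M C $$ (v, w)) f) f
       = (\<Sum>h<M. (\<Sum>v<N. C v h * f v)\<^sup>2)"
proof -
  have deg: "hdeg M C v \<noteq> 0" if "v < N" for v
    using hdeg_pos[OF covered[OF that]] by simp
  have "wdot N (hdeg M C) (matvec N (\<lambda>v w. hlaplacian N M C $$ (v, w)) f) f
      = (\<Sum>v<N. \<Sum>w<N. (hdeg M C v * hlaplacian N M C $$ (v, w)) * f w * f v)"
    unfolding wdot_def matvec_def by (simp add: sum_distrib_left sum_distrib_right mult_ac)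
  also have "\<dots> = (\<Sum>v<N. \<Sum>w<N. \<Sum>h<M. (C v h * f v) * (C w h * f w))"
    using deg by (simp add: hdeg_mult_hlaplacian sum_distrib_left mult_ac)
  also have "\<dots> = (\<Sum>v<N. \<Sum>h<M. \<Sum>w<N. (C v h * f v) * (C w h * f w))"
    by (rule sum.cong[OF refl], rule sum.swap)
  also have "\<dots> = (\<Sum>h<M. \<Sum>v<N. \<Sum>w<N. (C v h * f v) * (C w h * f w))"
    by (rule sum.swap)
  also have "\<dots> = (\<Sum>h<M. (\<Sum>v<N. C v h * f v)\<^sup>2)"
    by (simp add: power2_eq_square sum_product)
  finally show ?thesis .
qed

lemma hedge_sum_square_le:
  "(\<Sum>v<N. C v h * x v)\<^sup>2 \<le> real (card (hedge N C h)) * (\<Sum>v<N. (C v h * x v)\<^sup>2)"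
proof -
  have sub: "hedge N C h \<subseteq> {..<N}" by (auto simp: hedge_def)
  have "(\<Sum>v<N. C v h * x v) = (\<Sum>v\<in>hedge N C h. C v h * x v)"
    by (rule sum.mono_neutral_right) (auto simp: hedge_def)
  then have "(\<Sum>v<N. C v h * x v)\<^sup>2 \<le> real (card (hedge N C h)) * (\<Sum>v\<in>hedge N C h. (C v h * x v)\<^sup>2)"
    using Cauchy_Schwarz_ineq_sum[of "\<lambda>_. 1" "\<lambda>v. C v h * x v" "hedge N C h"] by simp
  also have "\<dots> \<le> real (card (hedge N C h)) * (\<Sum>v<N. (C v h * x v)\<^sup>2)"
    by (intro mult_left_mono sum_mono2 sub) auto
  finally show ?thesis .
qed

lemma hlaplacian_rayleigh_le:
  assumes covered: "\<And>v. v < N \<Longrightarrow> \<exists>j<M. v \<in> hedge N C j"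
    and ordered: "\<And>i j. i \<le> j \<Longrightarrow> j < M \<Longrightarrow> card (hedge N C i) \<le> card (hedge N C j)"
    and "k < M"
    and annihilated: "\<And>h. M - k \<le> h \<Longrightarrow> h < M \<Longrightarrow> (\<Sum>v<N. C v h * f v) = 0"
  shows "wdot N (hdeg M C) (matvec N (\<lambda>v w. hlaplacian N M C $$ (v, w)) f) f
       \<le> real (card (hedge N C (M - 1 - k))) * wdot N (hdeg M C) f f"
proof -
  define c where "c = real (card (hedge N C (M - 1 - k)))"
  have "c \<ge> 0" by (simp add: c_def)
  have "wdot N (hdeg M C) (matvec N (\<lambda>v w. hlaplacian N M C $$ (v, w)) f) f
      = (\<Sum>h<M. (\<Sum>v<N. C v h * f v)\<^sup>2)"
    by (rule hlaplacian_quadratic_form[OF covered])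
  also have "\<dots> = (\<Sum>h<M - k. (\<Sum>v<N. C v h * f v)\<^sup>2)"
    by (rule sum.mono_neutral_right) (use annihilated in auto)
  also have "\<dots> \<le> (\<Sum>h<M - k. c * (\<Sum>v<N. (C v h)\<^sup>2 * (f v)\<^sup>2))"
  proof (rule sum_mono)
    fix h assume "h \<in> {..<M - k}"
    then have "real (card (hedge N C h)) \<le> c"
      using ordered[of h "M - 1 - k"] \<open>k < M\<close> by (simp add: c_def)
    have "(\<Sum>v<N. C v h * f v)\<^sup>2 \<le> real (card (hedge N C h)) * (\<Sum>v<N. (C v h)\<^sup>2 * (f v)\<^sup>2)"
      using hedge_sum_square_le[where x = f] by (simp add: power_mult_distrib)
    also have "\<dots> \<le> c * (\<Sum>v<N. (C v h)\<^sup>2 * (f v)\<^sup>2)"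
      using \<open>real (card (hedge N C h)) \<le> c\<close> by (intro mult_right_mono sum_nonneg) auto
    finally show "(\<Sum>v<N. C v h * f v)\<^sup>2 \<le> c * (\<Sum>v<N. (C v h)\<^sup>2 * (f v)\<^sup>2)" .
  qed
  also have "\<dots> = c * (\<Sum>v<N. (\<Sum>h<M - k. (C v h)\<^sup>2) * (f v)\<^sup>2)"
    by (simp add: sum_distrib_left sum_distrib_right sum.swap[of _ "{..<N}"])
  also have "\<dots> \<le> c * (\<Sum>v<N. hdeg M C v * f v * f v)"
  proof (intro mult_left_mono sum_mono \<open>c \<ge> 0\<close>)
    fix v
    have "(\<Sum>h<M - k. (C v h)\<^sup>2) \<le> hdeg M C v" unfolding hdeg_def by (rule sum_mono2) auto
    then show "(\<Sum>h<M - k. (C v h)\<^sup>2) * (f v)\<^sup>2 \<le> hdeg M C v * f v * f v"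
      by (simp add: power2_eq_square mult.assoc mult_right_mono)
  qed
  also have "\<dots> = c * wdot N (hdeg M C) f f" by (simp add: wdot_def)
  finally show ?thesis by (simp add: c_def)
qed

lemma hlaplacian_eigenvalue_le_hedge_card:
  assumes covered: "\<And>v. v < N \<Longrightarrow> \<exists>j<M. v \<in> hedge N C j"
    and ordered: "\<And>i j. i \<le> j \<Longrightarrow> j < M \<Longrightarrow> card (hedge N C i) \<le> card (hedge N C j)"
    and eig: "sorted_eigenvalues (hlaplacian N M C) ls"
    and "k < N" "k < M"
  shows "ls ! (N - k - 1) \<le> real (card (hedge N C (M - 1 - k)))"
proof (rule ccontr)
  define c where "c = real (card (hedge N C (M - 1 - k)))"
  define a where "a = (\<lambda>v w. hlaplacian N M C $$ (v, w))"
  define d where "d = hdeg M C"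
  assume "\<not> ls ! (N - k - 1) \<le> real (card (hedge N C (M - 1 - k)))"
  then have "c < ls ! (N - k - 1)" by (simp add: c_def)
  moreover have "ls ! (N - k - 1) \<le> ls ! (N - Suc j)" if "j < Suc k" for j
    using eig that \<open>k < N\<close> by (intro sorted_nth_mono) (auto simp: sorted_eigenvalues_def hlaplacian_def)
  ultimately have ev_gt: "\<forall>j<Suc k. c < ls ! (N - Suc j)" by (meson less_le_trans)
  have dpos: "\<forall>v<N. d v > 0" using hdeg_pos[OF covered] by (simp add: d_def)
  have sym: "\<forall>v<N. \<forall>w<N. d v * a v w = d w * a w v"
  proof (intro allI impI)
    fix v w assume "v < N" "w < N"
    moreover have "d v \<noteq> 0" "d w \<noteq> 0" using dpos calculation by fastforce+
    ultimately show "d v * a v w = d w * a w v"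
      by (simp add: a_def d_def hdeg_mult_hlaplacian mult.commute)
  qed
  have "hlaplacian N M C \<in> carrier_mat N N" by (simp add: hlaplacian_def)
  then obtain q where fam: "orth_eigenfamily N d a (\<lambda>j. ls ! (N - Suc j)) (Suc k) q"
    using sorted_eigenvalues_orth_eigenfamily[OF _ eig dpos sym[unfolded a_def], of "Suc k"] \<open>k < N\<close>
    unfolding a_def by auto
  obtain \<alpha> where nontrivial: "\<exists>j<Suc k. \<alpha> j \<noteq> 0"
    and conds: "\<forall>i<k. (\<Sum>j<Suc k. (\<Sum>v<N. C v (M - 1 - i) * q j v) * \<alpha> j) = 0"
    using homogeneous_system_nontrivial[OF lessI, where g = "\<lambda>i j. \<Sum>v<N. C v (M - 1 - i) * q j v"]
    by blast
  define f where "f = (\<lambda>v. \<Sum>j<Suc k. \<alpha> j * q j v)"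
  have "(\<Sum>v<N. C v h * f v) = 0" if "M - k \<le> h" "h < M" for h
  proof -
    have "(\<Sum>v<N. C v h * f v) = (\<Sum>v<N. \<Sum>j<Suc k. C v h * (\<alpha> j * q j v))"
      unfolding f_def by (simp add: sum_distrib_left del: sum.lessThan_Suc)
    also have "\<dots> = (\<Sum>j<Suc k. (\<Sum>v<N. C v (M - 1 - (M - 1 - h)) * q j v) * \<alpha> j)"
      using that by (subst sum.swap) (simp add: sum_distrib_left sum_distrib_right mult_ac del: sum.lessThan_Suc)
    finally show ?thesis using conds[rule_format, of "M - 1 - h"] that by simp
  qed
  then have "wdot N d (matvec N a f) f \<le> c * wdot N d f f"
    using hlaplacian_rayleigh_le[OF covered ordered \<open>k < M\<close>] unfolding a_def d_def c_def by blast
  moreover obtain j0 where "j0 < Suc k" "\<alpha> j0 \<noteq> 0" using nontrivial by blast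
  then have "c * wdot N d f f < wdot N d (matvec N a f) f"
    using orth_eigenfamily_rayleigh_gt[OF fam ev_gt _ _ f_def] by blast
  ultimately show False by simp
qed

theorem mainTheorem9:
  fixes N M :: nat and C :: "nat \<Rightarrow> nat \<Rightarrow> real" and ls :: "real list"
  assumes nonempty_edges: "\<And>j. j < M \<Longrightarrow> hedge N C j \<noteq> {}"
    and covered: "\<And>v. v < N \<Longrightarrow> \<exists>j<M. v \<in> hedge N C j"
    and conn: "hconnected N M C"
    and ordered: "\<And>i j. i \<le> j \<Longrightarrow> j < M \<Longrightarrow> card (hedge N C i) \<le> card (hedge N C j)"
    and eig: "sorted_eigenvalues (hlaplacian N M C) ls"
  shows "(N \<ge> 2 \<and> M \<ge> 2 \<longrightarrow>
            ls ! (N - 2) \<le> max (real (card (hedge N C (M - 1))) - 1)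
                                 (real (card (hedge N C (M - 2)))))
       \<and> (\<forall>k. 1 \<le> k \<and> k \<le> min N M - 1 \<longrightarrow>
            ls ! (N - k - 1) \<le>
              Max ((\<lambda>i. real (card (hedge N C (M - 1 - i))) - real k + real i) ` {0..k}))"
proof (intro conjI impI allI)
  assume "N \<ge> 2 \<and> M \<ge> 2"
  then have "ls ! (N - 2) \<le> real (card (hedge N C (M - 2)))"
    using hlaplacian_eigenvalue_le_hedge_card[OF covered ordered eig, of 1] by (simp add: numeral_2_eq_2)
  then show "ls ! (N - 2) \<le> max (real (card (hedge N C (M - 1))) - 1) (real (card (hedge N C (M - 2))))"
    by simp
next
  fix k assume "1 \<le> k \<and> k \<le> min N M - 1"
  then have "k < N" "k < M" by auto
  then have "ls ! (N - k - 1) \<le> real (card (hedge N C (M - 1 - k))) - real k + real k"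
    using hlaplacian_eigenvalue_le_hedge_card[OF covered ordered eig, of k] by simp
  also have "\<dots> \<le> Max ((\<lambda>i. real (card (hedge N C (M - 1 - i))) - real k + real i) ` {0..k})"
    by (rule Max_ge) (auto intro!: image_eqI[where x = k])
  finally show "ls ! (N - k - 1) \<le> Max ((\<lambda>i. real (card (hedge N C (M - 1 - i))) - real k + real i) ` {0..k})" .
qed

end
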